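(* Let $\zeta$ be the Riemann zeta function. Then $$\lim_{x\to\infty}2^x\bigl[\ln\zeta(\ln\zeta(x)+1)-\ln\zeta(\zeta(x))\bigr]=\frac12 .$$ *)

theory Defs
  imports "HOL-Analysis.Analysis"
begin

text \<open>Riemann zeta function on the real half-line s > 1, given by its Dirichlet series
  (for s \<le> 1 the value is unspecified junk; only s > 1 is used below).\<close>
definition rzeta :: "real \<Rightarrow> real" where
  "rzeta s = (\<Sum>n. 1 / (real (Suc n)) powr s)"

end

theory Submission
  imports Defs "HOL-Real_Asymp.Real_Asymp"
begin

text \<open>Put \<open>b = \<zeta>(x) - 1\<close>, so that \<open>2\<^sup>x b \<rightarrow> 1\<close> and the expression is
  \<open>2\<^sup>x (ln \<zeta>(1 + ln (1 + b)) - ln \<zeta>(1 + b))\<close> with \<open>b \<rightarrow> 0\<^sup>+\<close>.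
  Near the pole, \<open>\<zeta>(1 + c) = 1/c + \<gamma> + o(1)\<close>, hence \<open>ln \<zeta>(1 + c) = - ln c + \<gamma> c + o(c)\<close>,
  and the difference equals \<open>ln (b / ln (1 + b)) + o(b) = b/2 + o(b)\<close>.\<close>

lemma powr_diff_quotient_bounds:
  fixes k c :: real
  assumes "0 < k" "0 < c"
  shows "1 / (k + 1) powr (1 + c) \<le> (k powr (-c) - (k + 1) powr (-c)) / c"
    and "(k powr (-c) - (k + 1) powr (-c)) / c \<le> 1 / k powr (1 + c)"
proof -
  have "\<exists>z. k < z \<and> z < k + 1 \<and>
      (k + 1) powr (-c) - k powr (-c) = (k + 1 - k) * (-c * z powr (-c - 1))"
    using assms by (intro MVT2 has_real_derivative_powr) auto
  then obtain z where z: "k < z" "z < k + 1"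
    and eq: "(k + 1) powr (-c) - k powr (-c) = -c * z powr (-c - 1)"
    by auto
  have "-(1 + c) = -c - 1" by simp
  then have "z powr (-c - 1) = 1 / z powr (1 + c)"
    using powr_minus_divide[of z "1 + c"] by (simp only:)
  then have quot: "(k powr (-c) - (k + 1) powr (-c)) / c = 1 / z powr (1 + c)"
    using eq assms by (simp add: field_simps)
  show "1 / (k + 1) powr (1 + c) \<le> (k powr (-c) - (k + 1) powr (-c)) / c"
    unfolding quot using z assms by (intro divide_left_mono powr_mono2 mult_pos_pos) auto
  show "(k powr (-c) - (k + 1) powr (-c)) / c \<le> 1 / k powr (1 + c)"
    unfolding quot using z assms by (intro divide_left_mono powr_mono2 mult_pos_pos) auto
qed

lemma summable_inverse_Suc_powr: "1 < s \<Longrightarrow> summable (\<lambda>n. 1 / real (Suc n) powr s)"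
proof -
  assume "1 < s"
  then have "summable (\<lambda>n. real n powr (-s))" by (subst summable_real_powr_iff) auto
  then have "summable (\<lambda>n. real (Suc n) powr (-s))" by (subst summable_Suc_iff)
  then show ?thesis by (simp add: powr_minus_divide)
qed

lemma summable_inverse_add_power2: "summable (\<lambda>n. 1 / real (n + k) ^ 2)"
  using summable_ignore_initial_segment[OF inverse_power_summable[of 2], of k]
  by (simp add: divide_inverse)

text \<open>The \<open>n\<close>-th term of \<open>\<zeta>(1 + c)\<close> minus the integral of \<open>t powr (-1 - c)\<close> over
  \<open>[n + 1, n + 2]\<close>. These integrals sum to \<open>1/c\<close>, and as \<open>c \<rightarrow> 0\<close> the terms become
  those of the Euler--Mascheroni series.\<close>
definition zeta_euler_term :: "real \<Rightarrow> nat \<Rightarrow> real" where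
  "zeta_euler_term c n =
     1 / real (n + 1) powr (1 + c) - (real (n + 1) powr (-c) - real (n + 2) powr (-c)) / c"

lemma zeta_euler_term_nonneg: "0 < c \<Longrightarrow> 0 \<le> zeta_euler_term c n"
  using powr_diff_quotient_bounds(2)[of "real (n + 1)" c]
  by (simp add: zeta_euler_term_def add.commute)

lemma zeta_euler_term_le:
  assumes "0 < c" "c \<le> 1"
  shows "zeta_euler_term c n \<le> 2 / real (n + 1) ^ 2"
proof -
  define k where "k = real (n + 1)"
  have k: "1 \<le> k" by (simp add: k_def)
  have "zeta_euler_term c n \<le> 1 / k powr (1 + c) - 1 / (k + 1) powr (1 + c)"
    using powr_diff_quotient_bounds(1)[of k c] assms k
    by (simp add: zeta_euler_term_def k_def add.commute)
  also have "\<dots> \<le> (1 + c) / k powr (2 + c)"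
  proof -
    have "(k powr (-(1 + c)) - (k + 1) powr (-(1 + c))) / (1 + c) \<le> 1 / k powr (1 + (1 + c))"
      using powr_diff_quotient_bounds(2)[of k "1 + c"] assms k by simp
    then have "(1 / k powr (1 + c) - 1 / (k + 1) powr (1 + c)) / (1 + c) \<le> 1 / k powr (2 + c)"
      by (simp only: powr_minus_divide) (simp add: add.assoc[symmetric])
    then show ?thesis
      using assms by (simp add: divide_le_eq mult.commute)
  qed
  also have "\<dots> \<le> 2 / k powr 2"
    using assms k by (intro frac_le powr_mono) auto
  finally show ?thesis
    using k by (simp add: k_def)
qed

lemma zeta_euler_term_sums:
  assumes "0 < c"
  shows "zeta_euler_term c sums (rzeta (1 + c) - 1 / c)"
proof -
  have "(\<lambda>n. real (Suc n) powr (-c) / c) \<longlonglongrightarrow> 0"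
    using assms by (intro tendsto_divide_zero LIMSEQ_Suc[OF tendsto_neg_powr] filterlim_real_sequentially) auto
  from telescope_sums'[OF this]
  have "(\<lambda>n. (real (n + 1) powr (-c) - real (n + 2) powr (-c)) / c) sums (1 / c)"
    by (simp add: diff_divide_distrib add.commute)
  moreover have "(\<lambda>n. 1 / real (n + 1) powr (1 + c)) sums rzeta (1 + c)"
    using summable_inverse_Suc_powr[of "1 + c"] assms by (simp add: rzeta_def summable_sums)
  ultimately show ?thesis
    unfolding zeta_euler_term_def by (intro sums_diff)
qed

lemma zeta_euler_term_tendsto:
  "((\<lambda>c. zeta_euler_term c n) \<longlongrightarrow> inverse (real (n + 1)) + ln (real (n + 1)) - ln (real (n + 2)))
     (at_right 0)"
proof -
  define k where "k = real (n + 1)"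
  have "k > 0" by (simp add: k_def)
  then have "((\<lambda>c. 1 / k powr (1 + c) - (k powr (-c) - (k + 1) powr (-c)) / c)
      \<longlongrightarrow> inverse k - (ln (k + 1) - ln k)) (at_right 0)"
    by (real_asymp simp: exp_minus)
  then show ?thesis
    by (simp add: zeta_euler_term_def k_def add.commute algebra_simps)
qed

lemma rzeta_minus_inverse_tendsto:
  "((\<lambda>c. rzeta (1 + c) - 1 / c) \<longlongrightarrow> euler_mascheroni) (at_right 0)"
proof -
  have bound: "norm (zeta_euler_term c n) \<le> 2 / real (n + 1) ^ 2" if "c \<in> {0<..<1}" for c n
    using that zeta_euler_term_le[of c n] zeta_euler_term_nonneg[of c n] by simp
  have "eventually (\<lambda>(n, c). norm (zeta_euler_term c n) \<le> 2 / real (n + 1) ^ 2)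
      (at_top \<times>\<^sub>F at_right 0)"
    using eventually_prodI[OF eventually_True eventually_at_right_real[OF zero_less_one]]
    by (rule eventually_mono) (simp only: split_beta, rule bound, simp)
  moreover have "summable (\<lambda>n. 2 / real (n + 1) ^ 2)"
    using summable_mult[OF summable_inverse_add_power2[of 1], of 2] by simp
  ultimately have "((\<lambda>c. \<Sum>n. zeta_euler_term c n) \<longlongrightarrow>
      (\<Sum>n. inverse (real (n + 1)) + ln (real (n + 1)) - ln (real (n + 2)))) (at_right 0)"
    using tannerys_theorem[OF zeta_euler_term_tendsto] by simp
  then have "((\<lambda>c. \<Sum>n. zeta_euler_term c n) \<longlongrightarrow> euler_mascheroni) (at_right 0)"
    using euler_mascheroni_sum_real by (simp add: sums_iff)
  moreover have "eventually (\<lambda>c. (\<Sum>n. zeta_euler_term c n) = rzeta (1 + c) - 1 / c) (at_right 0)"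
    using eventually_at_right_less by (rule eventually_mono) (metis zeta_euler_term_sums sums_unique)
  ultimately show ?thesis
    by (rule Lim_transform_eventually)
qed

lemma rzeta_minus_one_sums:
  assumes "1 < x"
  shows "(\<lambda>n. (2 / real (n + 2)) powr x) sums (2 powr x * (rzeta x - 1))"
proof -
  have "(\<lambda>n. 1 / real (Suc n) powr x) sums rzeta x"
    using summable_inverse_Suc_powr[OF assms] by (simp add: rzeta_def summable_sums)
  then have "(\<lambda>n. 1 / real (Suc (Suc n)) powr x) sums (rzeta x - 1)"
    using sums_Suc_iff[of "\<lambda>n. 1 / real (Suc n) powr x"] by simp
  from sums_mult[OF this, of "2 powr x"] show ?thesis
    by (simp add: powr_divide)
qed

lemma rzeta_minus_one_asymp: "((\<lambda>x. 2 powr x * (rzeta x - 1)) \<longlongrightarrow> 1) at_top"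
proof -
  have bound: "norm ((2 / real (n + 2)) powr x) \<le> 4 * (1 / real (n + 2) ^ 2)"
    if "2 \<le> x" for n x
  proof -
    have "(2 / real (n + 2)) powr x \<le> (2 / real (n + 2)) powr 2"
      using that by (intro powr_mono') auto
    then show ?thesis
      by (simp add: power_divide)
  qed
  have "((\<lambda>x. (2 / real (n + 2)) powr x) \<longlongrightarrow> (if n = 0 then 1 else 0)) at_top" for n
  proof (cases n)
    case (Suc m)
    have "((\<lambda>x. a powr x) \<longlongrightarrow> 0) at_top" if "0 < a" "a < 1" for a :: real
      using that by real_asymp
    moreover have "0 < 2 / real (n + 2)" "2 / real (n + 2) < 1"
      using Suc by (auto simp: field_simps)
    ultimately show ?thesis
      using Suc by simp
  qed simp
  moreover have "eventually (\<lambda>(n, x). norm ((2 / real (n + 2)) powr x) \<le> 4 * (1 / real (n + 2) ^ 2))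
      (at_top \<times>\<^sub>F at_top)"
    using eventually_prodI[OF eventually_True eventually_ge_at_top[of 2]]
    by (rule eventually_mono) (simp only: split_beta, rule bound, simp)
  moreover have "summable (\<lambda>n. 4 * (1 / real (n + 2) ^ 2))"
    using summable_inverse_add_power2 by (rule summable_mult)
  ultimately have "((\<lambda>x. \<Sum>n. (2 / real (n + 2)) powr x) \<longlongrightarrow> (\<Sum>n. if n = 0 then 1 else 0)) at_top"
    by (rule tannerys_theorem[THEN conjunct2, THEN conjunct2]) simp
  then have "((\<lambda>x. \<Sum>n. (2 / real (n + 2)) powr x) \<longlongrightarrow> 1) at_top"
    using sums_single[of 0 "\<lambda>_. 1 :: real"] by (simp add: sums_iff)
  moreover have "eventually (\<lambda>x. (\<Sum>n. (2 / real (n + 2)) powr x) = 2 powr x * (rzeta x - 1)) at_top"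
    using eventually_gt_at_top[of 1] by (rule eventually_mono) (metis rzeta_minus_one_sums sums_unique)
  ultimately show ?thesis
    by (rule Lim_transform_eventually)
qed

lemma rzeta_minus_one_at_right_zero: "filterlim (\<lambda>x. rzeta x - 1) (at_right 0) at_top"
proof -
  have "((\<lambda>x. 2 powr x * (rzeta x - 1) * 2 powr (-x)) \<longlongrightarrow> 1 * 0) at_top"
    by (intro tendsto_mult rzeta_minus_one_asymp) real_asymp
  moreover have "2 powr x * (rzeta x - 1) * 2 powr (-x) = rzeta x - 1" for x :: real
    by (simp add: powr_minus)
  ultimately have "((\<lambda>x. rzeta x - 1) \<longlongrightarrow> 0) at_top"
    by simp
  moreover have "eventually (\<lambda>x. 0 < 2 powr x * (rzeta x - 1)) at_top"
    using rzeta_minus_one_asymp by (rule order_tendstoD) simp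
  then have "eventually (\<lambda>x. 0 < rzeta x - 1) at_top"
    by (rule eventually_mono) (simp add: zero_less_mult_iff)
  ultimately show ?thesis
    by (simp add: filterlim_at eventually_mono)
qed

lemma rzeta_ge_inverse: "0 < c \<Longrightarrow> 1 / c \<le> rzeta (1 + c)"
  using zeta_euler_term_sums[of c] zeta_euler_term_nonneg[of c]
  by (metis diff_ge_0_iff_ge sums_iff suminf_nonneg)

lemma abs_ln_diff_le:
  fixes u v :: real
  assumes "1 \<le> u" "1 \<le> v"
  shows "\<bar>ln u - ln v\<bar> \<le> \<bar>u - v\<bar>"
proof -
  have "ln y - ln x \<le> y - x" if "1 \<le> x" "x \<le> y" for x y :: real
  proof -
    have "ln y - ln x = ln (y / x)"
      using that by (simp add: ln_div)
    also have "\<dots> \<le> y / x - 1"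
      using that by (intro ln_le_minus_one) auto
    also have "\<dots> = (y - x) / x"
      using that by (simp add: field_simps)
    also have "\<dots> \<le> y - x"
      using that by (simp add: divide_le_eq mult_le_cancel_left1)
    finally show ?thesis .
  qed
  then show ?thesis
    using assms by (cases "u \<le> v") (auto simp: abs_if)
qed

lemma mult_rzeta_shift_tendsto:
  "((\<lambda>c. (ln (1 + c) * rzeta (1 + ln (1 + c)) - c * rzeta (1 + c)) / c) \<longlongrightarrow> 0) (at_right 0)"
proof -
  define F where "F c = rzeta (1 + c) - 1 / c" for c
  have F: "(F \<longlongrightarrow> euler_mascheroni) (at_right 0)"
    unfolding F_def by (rule rzeta_minus_inverse_tendsto)
  have "filterlim (\<lambda>c::real. ln (1 + c)) (at_right 0) (at_right 0)"
    by real_asymp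
  from filterlim_compose[OF F this]
  have "((\<lambda>c. (ln (1 + c) - c) / c * F (ln (1 + c)) + (F (ln (1 + c)) - F c))
      \<longlongrightarrow> 0 * euler_mascheroni + (euler_mascheroni - euler_mascheroni)) (at_right 0)"
    by (intro tendsto_intros F) real_asymp
  moreover have "eventually (\<lambda>c. (ln (1 + c) - c) / c * F (ln (1 + c)) + (F (ln (1 + c)) - F c) =
      (ln (1 + c) * rzeta (1 + ln (1 + c)) - c * rzeta (1 + c)) / c) (at_right 0)"
    using eventually_at_right_less
    by (rule eventually_mono) (simp add: F_def field_simps)
  ultimately show ?thesis
    by (simp add: Lim_transform_eventually)
qed

lemma ln_rzeta_shift_tendsto:
  "((\<lambda>c. (ln (rzeta (1 + ln (1 + c))) - ln (rzeta (1 + c))) / c) \<longlongrightarrow> 1 / 2) (at_right 0)"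
proof -
  define h where "h c = c * rzeta (1 + c)" for c
  have h_ge: "1 \<le> h c" if "0 < c" for c
    using rzeta_ge_inverse[OF that] that by (simp add: h_def divide_le_eq mult.commute)
  have rzeta_pos: "0 < rzeta (1 + c)" if "0 < c" for c
    using rzeta_ge_inverse[OF that] that by (meson less_le_trans zero_less_divide_1_iff)
  have "((\<lambda>c. (ln (h (ln (1 + c))) - ln (h c)) / c) \<longlongrightarrow> 0) (at_right 0)"
  proof (rule Lim_null_comparison)
    show "eventually (\<lambda>c. norm ((ln (h (ln (1 + c))) - ln (h c)) / c)
        \<le> \<bar>(h (ln (1 + c)) - h c) / c\<bar>) (at_right 0)"
      using eventually_at_right_less
      by (rule eventually_mono) (simp add: abs_ln_diff_le h_ge divide_right_mono abs_divide)
    show "((\<lambda>c. \<bar>(h (ln (1 + c)) - h c) / c\<bar>) \<longlongrightarrow> 0) (at_right 0)"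
      unfolding h_def by (intro tendsto_rabs_zero mult_rzeta_shift_tendsto)
  qed
  moreover have "((\<lambda>c::real. ln (c / ln (1 + c)) / c) \<longlongrightarrow> 1 / 2) (at_right 0)"
    by real_asymp
  ultimately have "((\<lambda>c. ln (c / ln (1 + c)) / c + (ln (h (ln (1 + c))) - ln (h c)) / c)
      \<longlongrightarrow> 1 / 2 + 0) (at_right 0)"
    by (intro tendsto_add)
  moreover have "eventually (\<lambda>c. ln (c / ln (1 + c)) / c + (ln (h (ln (1 + c))) - ln (h c)) / c =
      (ln (rzeta (1 + ln (1 + c))) - ln (rzeta (1 + c))) / c) (at_right 0)"
    using eventually_at_right_less
  proof (rule eventually_mono)
    fix c :: real
    assume "0 < c"
    then have "0 < ln (1 + c)" "0 < rzeta (1 + c)" "0 < rzeta (1 + ln (1 + c))"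
      by (simp_all add: rzeta_pos)
    with \<open>0 < c\<close> show "ln (c / ln (1 + c)) / c + (ln (h (ln (1 + c))) - ln (h c)) / c =
        (ln (rzeta (1 + ln (1 + c))) - ln (rzeta (1 + c))) / c"
      by (simp add: h_def ln_div ln_mult diff_divide_distrib add_divide_distrib)
  qed
  ultimately show ?thesis
    by (simp add: Lim_transform_eventually)
qed

theorem mainTheorem8:
  shows "((\<lambda>x::real. 2 powr x * (ln (rzeta (ln (rzeta x) + 1)) - ln (rzeta (rzeta x))))
           \<longlongrightarrow> 1 / 2) at_top"
proof -
  define b where "b x = rzeta x - 1" for x
  have b: "filterlim b (at_right 0) at_top"
    unfolding b_def by (rule rzeta_minus_one_at_right_zero)
  have "((\<lambda>x. 2 powr x * b x * ((ln (rzeta (1 + ln (1 + b x))) - ln (rzeta (1 + b x))) / b x))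
      \<longlongrightarrow> 1 * (1 / 2)) at_top"
    using rzeta_minus_one_asymp filterlim_compose[OF ln_rzeta_shift_tendsto b]
    unfolding b_def by (rule tendsto_mult)
  moreover have "eventually (\<lambda>x. 2 powr x * b x * ((ln (rzeta (1 + ln (1 + b x))) - ln (rzeta (1 + b x))) / b x)
      = 2 powr x * (ln (rzeta (ln (rzeta x) + 1)) - ln (rzeta (rzeta x)))) at_top"
    using b unfolding filterlim_at
    by (auto elim!: eventually_mono simp: b_def add.commute)
  ultimately show ?thesis
    by (simp add: Lim_transform_eventually)
qed

end
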